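(* For every random variable $f$, the quantization $\widehat f$ is a well-defined bounded self-adjoint operator on $H$. If moreover $f\ge 0$, then $\|\widehat f\|\le\|f\|$, where $\|f\|=\left(\int|f|^2d\nu\right)^{1/2}$.
   Context: $(\Omega,\mathcal{A},\nu)$ is a probability space and $H=L_2(\Omega,\mathcal{A},\nu)$ is the complex Hilbert space with inner product $\langle f,g\rangle=\int\bar f g\,d\nu$. A random variable is a real-valued $f\in H$. For a random variable $f\ge 0$, its quantization $\widehat f$ is the operator on $H$ given by $(\widehat f g)(y)=\int\min[f(x),f(y)]\,g(x)\,d\nu(x)$. For an arbitrary random variable $f$, write $f=f^+-f^-$ with $f^+=\max(f,0)$, $f^-=-\min(f,0)$, and define $\widehat f=\widehat{f^+}-\widehat{f^-}$. *)

theory Defs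
  imports "HOL-Probability.Probability"
begin

text \<open>The complex Hilbert space H = L2(Omega, A, nu), represented by square-integrable
  complex-valued measurable functions (elements of H are their a.e.-classes).\<close>

definition L2 :: "'a measure \<Rightarrow> ('a \<Rightarrow> complex) set" where
  "L2 M = {g. g \<in> borel_measurable M \<and> integrable M (\<lambda>x. (cmod (g x))\<^sup>2)}"

definition L2norm :: "'a measure \<Rightarrow> ('a \<Rightarrow> complex) \<Rightarrow> real" where
  "L2norm M g = sqrt (\<integral>x. (cmod (g x))\<^sup>2 \<partial>M)"

definition L2inner :: "'a measure \<Rightarrow> ('a \<Rightarrow> complex) \<Rightarrow> ('a \<Rightarrow> complex) \<Rightarrow> complex" where
  "L2inner M g h = (\<integral>x. cnj (g x) * h x \<partial>M)"

definition random_var :: "'a measure \<Rightarrow> ('a \<Rightarrow> real) \<Rightarrow> bool" where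
  "random_var M f \<longleftrightarrow> f \<in> borel_measurable M \<and> integrable M (\<lambda>x. (f x)\<^sup>2)"

definition pos_part :: "('a \<Rightarrow> real) \<Rightarrow> 'a \<Rightarrow> real" where
  "pos_part f = (\<lambda>x. max (f x) 0)"

definition neg_part :: "('a \<Rightarrow> real) \<Rightarrow> 'a \<Rightarrow> real" where
  "neg_part f = (\<lambda>x. - min (f x) 0)"

definition quant_nonneg :: "'a measure \<Rightarrow> ('a \<Rightarrow> real) \<Rightarrow> ('a \<Rightarrow> complex) \<Rightarrow> 'a \<Rightarrow> complex" where
  "quant_nonneg M f g y = (\<integral>x. complex_of_real (min (f x) (f y)) * g x \<partial>M)"

definition quant :: "'a measure \<Rightarrow> ('a \<Rightarrow> real) \<Rightarrow> ('a \<Rightarrow> complex) \<Rightarrow> 'a \<Rightarrow> complex" where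
  "quant M f g y = quant_nonneg M (pos_part f) g y - quant_nonneg M (neg_part f) g y"

end

theory Submission
  imports Defs
begin

text \<open>
  Since \<open>0 \<le> min (\<phi> x) (\<phi> y) \<le> \<phi> y\<close>, every value
  of the operator is dominated by \<open>\<phi> y \<cdot> \<parallel>g\<parallel>\<^sub>1\<close>; this one pointwise estimate shows that the
  defining integrals exist and, squared and integrated, that the image lies in \<open>L\<^sub>2\<close> with
  \<open>\<parallel>Q\<^sub>\<phi> g\<parallel> \<le> \<parallel>\<phi>\<parallel> \<parallel>g\<parallel>\<^sub>1 \<le> \<parallel>\<phi>\<parallel> \<parallel>g\<parallel>\<close> (in a probability space \<open>\<parallel>g\<parallel>\<^sub>1 \<le> \<parallel>g\<parallel>\<close>).  Symmetry of
  the kernel together with Fubini's theorem gives self-adjointness.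

  For a general random variable \<open>f = f\<^sup>+ - f\<^sup>-\<close> the quantization is the difference of two such
  operators; its pointwise bound \<open>\<bar>f y\<bar> \<parallel>g\<parallel>\<^sub>1\<close> yields \<open>\<parallel>Q\<^sub>f g\<parallel> \<le> \<parallel>f\<parallel> \<parallel>g\<parallel>\<close> for every \<open>f\<close>,
  in particular for nonnegative \<open>f\<close>, and the main theorem collects all of these properties.
\<close>

lemma borel_measurable_cnj [measurable (raw)]:
  "f \<in> borel_measurable M \<Longrightarrow> (\<lambda>x. cnj (f x)) \<in> borel_measurable M"
  by (rule borel_measurable_continuous_on) (auto intro: continuous_on_id)

section \<open>Square-integrable functions\<close>

text \<open>The product of two square-integrable real functions is integrable, by \<open>2\<bar>ab\<bar> \<le> a\<^sup>2 + b\<^sup>2\<close>.\<close>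

lemma integrable_mult_square_integrable:
  fixes a b :: "'a \<Rightarrow> real"
  assumes [measurable]: "a \<in> borel_measurable M" "b \<in> borel_measurable M"
    and "integrable M (\<lambda>x. (a x)\<^sup>2)" "integrable M (\<lambda>x. (b x)\<^sup>2)"
  shows "integrable M (\<lambda>x. a x * b x)"
proof (rule Bochner_Integration.integrable_bound)
  show "integrable M (\<lambda>x. (a x)\<^sup>2 + (b x)\<^sup>2)" using assms by auto
  have "\<bar>a x * b x\<bar> \<le> (a x)\<^sup>2 + (b x)\<^sup>2" for x
  proof -
    have "2 * (\<bar>a x\<bar> * \<bar>b x\<bar>) \<le> (a x)\<^sup>2 + (b x)\<^sup>2"
      using zero_le_power2[of "\<bar>a x\<bar> - \<bar>b x\<bar>"] by (simp add: power2_diff)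
    moreover have "0 \<le> \<bar>a x\<bar> * \<bar>b x\<bar>" by simp
    ultimately show ?thesis unfolding abs_mult by linarith
  qed
  then show "AE x in M. norm (a x * b x) \<le> norm ((a x)\<^sup>2 + (b x)\<^sup>2)" by simp
qed measurable

lemma L2_borel_measurable: "g \<in> L2 M \<Longrightarrow> g \<in> borel_measurable M"
  by (simp add: L2_def)

lemma L2inner_integrable:
  assumes u: "u \<in> L2 M" and v: "v \<in> L2 M"
  shows "integrable M (\<lambda>x. cnj (u x) * v x)"
proof -
  have [measurable]: "u \<in> borel_measurable M" "v \<in> borel_measurable M"
    using u v by (simp_all add: L2_def)
  have "integrable M (\<lambda>x. cmod (u x) * cmod (v x))"
    by (rule integrable_mult_square_integrable) (use u v in \<open>auto simp: L2_def\<close>)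
  then show ?thesis
    by (rule Bochner_Integration.integrable_bound) (auto simp: norm_mult)
qed

lemma L2inner_diff_left:
  assumes "u \<in> L2 M" "v \<in> L2 M" "h \<in> L2 M"
  shows "L2inner M (\<lambda>x. u x - v x) h = L2inner M u h - L2inner M v h"
  unfolding L2inner_def using L2inner_integrable[OF assms(1,3)] L2inner_integrable[OF assms(2,3)]
  by (simp add: left_diff_distrib)

lemma L2inner_diff_right:
  assumes "g \<in> L2 M" "u \<in> L2 M" "v \<in> L2 M"
  shows "L2inner M g (\<lambda>x. u x - v x) = L2inner M g u - L2inner M g v"
  unfolding L2inner_def using L2inner_integrable[OF assms(1,2)] L2inner_integrable[OF assms(1,3)]
  by (simp add: right_diff_distrib)

lemma L2_pointwise_bound:
  fixes u :: "'a \<Rightarrow> complex" and \<psi> :: "'a \<Rightarrow> real"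
  assumes [measurable]: "u \<in> borel_measurable M" "\<psi> \<in> borel_measurable M"
    and \<psi>2: "integrable M (\<lambda>x. (\<psi> x)\<^sup>2)" and c: "0 \<le> c"
    and bound: "\<And>y. cmod (u y) \<le> \<bar>\<psi> y\<bar> * c"
  shows "u \<in> L2 M" and "L2norm M u \<le> c * sqrt (\<integral>x. (\<psi> x)\<^sup>2 \<partial>M)"
proof -
  have sq: "(cmod (u y))\<^sup>2 \<le> c\<^sup>2 * (\<psi> y)\<^sup>2" for y
    using power_mono[OF bound[of y] norm_ge_zero, of 2] by (simp add: power_mult_distrib mult.commute)
  have int: "integrable M (\<lambda>y. (cmod (u y))\<^sup>2)"
    by (rule Bochner_Integration.integrable_bound[where f = "\<lambda>y. c\<^sup>2 * (\<psi> y)\<^sup>2"])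
       (use \<psi>2 sq in auto)
  then show "u \<in> L2 M" by (simp add: L2_def)
  have "(\<integral>y. (cmod (u y))\<^sup>2 \<partial>M) \<le> (\<integral>y. c\<^sup>2 * (\<psi> y)\<^sup>2 \<partial>M)"
    using int \<psi>2 sq by (intro integral_mono) auto
  then have "L2norm M u \<le> sqrt (c\<^sup>2 * (\<integral>y. (\<psi> y)\<^sup>2 \<partial>M))"
    unfolding L2norm_def by simp
  also have "\<dots> = c * sqrt (\<integral>y. (\<psi> y)\<^sup>2 \<partial>M)"
    using c by (simp add: real_sqrt_mult)
  finally show "L2norm M u \<le> c * sqrt (\<integral>x. (\<psi> x)\<^sup>2 \<partial>M)" .
qed

context prob_space
begin

text \<open>In a probability space \<open>L\<^sub>2 \<subseteq> L\<^sub>1\<close>, and the \<open>L\<^sub>1\<close>-norm is bounded by the \<open>L\<^sub>2\<close>-norm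
  (the variance of \<open>\<bar>g\<bar>\<close> is nonnegative).\<close>

lemma L2_integrable:
  assumes "g \<in> L2 M"
  shows "integrable M g"
proof -
  have m[measurable]: "g \<in> borel_measurable M" using assms by (simp add: L2_def)
  have "integrable M (\<lambda>x. cmod (g x))"
    by (rule square_integrable_imp_integrable) (use assms in \<open>auto simp: L2_def\<close>)
  then show ?thesis using integrable_norm_iff[OF m] by simp
qed

lemma L1_norm_le_L2norm:
  assumes g: "g \<in> L2 M"
  shows "(\<integral>x. cmod (g x) \<partial>M) \<le> L2norm M g"
proof -
  have i1: "integrable M (\<lambda>x. cmod (g x))" using L2_integrable[OF g] by simp
  have i2: "integrable M (\<lambda>x. (cmod (g x))\<^sup>2)" using g by (simp add: L2_def)
  have "0 \<le> variance (\<lambda>x. cmod (g x))" by (rule Bochner_Integration.integral_nonneg) auto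
  then have "(\<integral>x. cmod (g x) \<partial>M)\<^sup>2 \<le> (\<integral>x. (cmod (g x))\<^sup>2 \<partial>M)"
    using variance_eq[OF i1 i2] by simp
  then show ?thesis unfolding L2norm_def by (rule real_le_rsqrt)
qed

end

section \<open>The kernel operator of a nonnegative function\<close>

text \<open>The kernel \<open>min (\<phi> x) (\<phi> y)\<close> is dominated
  by \<open>\<phi> y\<close>, so the defining integral exists for every integrable \<open>g\<close>.\<close>

lemma quant_nonneg_integrable:
  assumes \<phi>[measurable]: "\<phi> \<in> borel_measurable M" and pos: "\<And>x. 0 \<le> \<phi> x"
    and g: "integrable M g"
  shows "integrable M (\<lambda>x. complex_of_real (min (\<phi> x) (\<phi> y)) * g x)"
proof (rule Bochner_Integration.integrable_bound)
  show "integrable M (\<lambda>x. complex_of_real (\<phi> y) * g x)" using g by simp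
  show "AE x in M. norm (complex_of_real (min (\<phi> x) (\<phi> y)) * g x)
                     \<le> norm (complex_of_real (\<phi> y) * g x)"
    using pos by (intro AE_I2) (auto simp: norm_mult intro!: mult_right_mono)
qed (use g in measurable)

lemma quant_nonneg_bound:
  assumes \<phi>[measurable]: "\<phi> \<in> borel_measurable M" and pos: "\<And>x. 0 \<le> \<phi> x"
    and g: "integrable M g"
  shows "cmod (quant_nonneg M \<phi> g y) \<le> \<phi> y * (\<integral>x. cmod (g x) \<partial>M)"
proof -
  have "integrable M (\<lambda>x. norm (complex_of_real (min (\<phi> x) (\<phi> y)) * g x))"
    using quant_nonneg_integrable[OF \<phi> pos g, where y = y] by simp
  then have imin: "integrable M (\<lambda>x. min (\<phi> x) (\<phi> y) * cmod (g x))"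
    using pos by (simp add: norm_mult)
  have "cmod (quant_nonneg M \<phi> g y)
          \<le> (\<integral>x. norm (complex_of_real (min (\<phi> x) (\<phi> y)) * g x) \<partial>M)"
    unfolding quant_nonneg_def by (rule integral_norm_bound)
  also have "\<dots> \<le> (\<integral>x. \<phi> y * cmod (g x) \<partial>M)"
    using pos imin g by (intro integral_mono) (auto simp: norm_mult intro!: mult_right_mono)
  also have "\<dots> = \<phi> y * (\<integral>x. cmod (g x) \<partial>M)" by simp
  finally show ?thesis .
qed

lemma quant_nonneg_AE_cong:
  assumes [measurable]: "\<phi> \<in> borel_measurable M" "g \<in> borel_measurable M" "g' \<in> borel_measurable M"
    and "AE x in M. g x = g' x"
  shows "quant_nonneg M \<phi> g y = quant_nonneg M \<phi> g' y"
  unfolding quant_nonneg_def using assms by (intro integral_cong_AE) auto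

lemma quant_nonneg_linear:
  assumes \<phi>[measurable]: "\<phi> \<in> borel_measurable M" and pos: "\<And>x. 0 \<le> \<phi> x"
    and g: "integrable M g" and h: "integrable M h"
  shows "quant_nonneg M \<phi> (\<lambda>x. a * g x + b * h x) y
           = a * quant_nonneg M \<phi> g y + b * quant_nonneg M \<phi> h y"
proof -
  have "quant_nonneg M \<phi> (\<lambda>x. a * g x + b * h x) y =
     (\<integral>x. a * (complex_of_real (min (\<phi> x) (\<phi> y)) * g x)
          + b * (complex_of_real (min (\<phi> x) (\<phi> y)) * h x) \<partial>M)"
    unfolding quant_nonneg_def by (simp add: algebra_simps)
  also have "\<dots> = a * quant_nonneg M \<phi> g y + b * quant_nonneg M \<phi> h y"
    unfolding quant_nonneg_def
    using quant_nonneg_integrable[OF \<phi> pos g, where y = y] quant_nonneg_integrable[OF \<phi> pos h, where y = y]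
    by simp
  finally show ?thesis .
qed

context sigma_finite_measure
begin

lemma quant_nonneg_measurable [measurable (raw)]:
  assumes [measurable]: "\<phi> \<in> borel_measurable M" "g \<in> borel_measurable M"
  shows "quant_nonneg M \<phi> g \<in> borel_measurable M"
  unfolding quant_nonneg_def by measurable

text \<open>The integrand of \<open>\<langle>Q\<^sub>\<phi> g, h\<rangle>\<close>, written as a double integral, is integrable on \<open>M \<times> M\<close>:
  its absolute value is at most \<open>\<bar>g x\<bar> \<phi>(x) \<bar>h y\<bar>\<close>.  This is what licenses Fubini below.\<close>

lemma quant_nonneg_kernel_integrable:
  assumes \<phi>[measurable]: "\<phi> \<in> borel_measurable M" and pos: "\<And>x. 0 \<le> \<phi> x"
    and g: "integrable M g" and h: "integrable M h"
    and g\<phi>: "integrable M (\<lambda>x. cmod (g x) * \<phi> x)"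
  shows "integrable (M \<Otimes>\<^sub>M M)
           (\<lambda>(x, y). cnj (g x) * (complex_of_real (min (\<phi> x) (\<phi> y)) * h y))"
    (is "integrable _ (case_prod ?K)")
proof -
  interpret P: pair_sigma_finite M M
    by (simp add: pair_sigma_finite_def sigma_finite_measure_axioms)
  have [measurable]: "g \<in> borel_measurable M" "h \<in> borel_measurable M" using g h by auto
  have inner: "integrable M (\<lambda>y. ?K x y)" for x
    using quant_nonneg_integrable[OF \<phi> pos h, where y = x] by (simp add: min.commute)
  have pw: "norm (?K x y) \<le> cmod (g x) * \<phi> x * cmod (h y)" for x y
  proof -
    have "norm (?K x y) = cmod (g x) * (min (\<phi> x) (\<phi> y) * cmod (h y))"
      using pos[of x] pos[of y] by (simp add: norm_mult)
    also have "\<dots> \<le> cmod (g x) * (\<phi> x * cmod (h y))"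
      by (intro mult_left_mono mult_right_mono) auto
    finally show ?thesis by (simp add: mult.assoc)
  qed
  have row: "(\<integral>y. norm (?K x y) \<partial>M) \<le> cmod (g x) * \<phi> x * (\<integral>y. cmod (h y) \<partial>M)" for x
  proof -
    have "(\<integral>y. norm (?K x y) \<partial>M) \<le> (\<integral>y. cmod (g x) * \<phi> x * cmod (h y) \<partial>M)"
      using inner h pw by (intro integral_mono) auto
    then show ?thesis by simp
  qed
  have outer: "integrable M (\<lambda>x. \<integral>y. norm (?K x y) \<partial>M)"
  proof (rule Bochner_Integration.integrable_bound)
    show "integrable M (\<lambda>x. cmod (g x) * \<phi> x * (\<integral>y. cmod (h y) \<partial>M))"
      using g\<phi> by simp
    show "AE x in M. norm (\<integral>y. norm (?K x y) \<partial>M)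
                       \<le> norm (cmod (g x) * \<phi> x * (\<integral>y. cmod (h y) \<partial>M))"
      using row pos by (intro AE_I2) (simp add: abs_of_nonneg)
  qed measurable
  show ?thesis by (rule P.Fubini_integrable) (use outer inner in auto)
qed

text \<open>Self-adjointness: by symmetry of the kernel both inner products are the same double
  integral, taken in the two possible orders.\<close>

lemma quant_nonneg_self_adjoint:
  assumes \<phi>[measurable]: "\<phi> \<in> borel_measurable M" and pos: "\<And>x. 0 \<le> \<phi> x"
    and g: "integrable M g" and h: "integrable M h"
    and g\<phi>: "integrable M (\<lambda>x. cmod (g x) * \<phi> x)"
  shows "L2inner M (quant_nonneg M \<phi> g) h = L2inner M g (quant_nonneg M \<phi> h)"
proof -
  interpret P: pair_sigma_finite M M
    by (simp add: pair_sigma_finite_def sigma_finite_measure_axioms)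
  define K where "K x y = cnj (g x) * (complex_of_real (min (\<phi> x) (\<phi> y)) * h y)" for x y
  have left: "cnj (quant_nonneg M \<phi> g y) * h y = (\<integral>x. K x y \<partial>M)" for y
  proof -
    have "(\<integral>x. K x y \<partial>M) = (\<integral>x. cnj (complex_of_real (min (\<phi> x) (\<phi> y)) * g x) * h y \<partial>M)"
      by (simp add: K_def mult_ac)
    also have "\<dots> = cnj (quant_nonneg M \<phi> g y) * h y"
      using Bochner_Integration.integral_cnj[of M "\<lambda>x. complex_of_real (min (\<phi> x) (\<phi> y)) * g x"]
      by (simp only: quant_nonneg_def integral_mult_left_zero)
    finally show ?thesis by simp
  qed
  have right: "cnj (g x) * quant_nonneg M \<phi> h x = (\<integral>y. K x y \<partial>M)" for x
    unfolding K_def quant_nonneg_def by (simp add: min.commute)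
  have "L2inner M (quant_nonneg M \<phi> g) h = (\<integral>y. (\<integral>x. K x y \<partial>M) \<partial>M)"
    unfolding L2inner_def by (simp only: left)
  also have "\<dots> = (\<integral>x. (\<integral>y. K x y \<partial>M) \<partial>M)"
    using quant_nonneg_kernel_integrable[OF \<phi> pos g h g\<phi>]
    by (intro P.Fubini_integral) (simp add: K_def case_prod_beta')
  also have "\<dots> = L2inner M g (quant_nonneg M \<phi> h)"
    unfolding L2inner_def by (simp only: right)
  finally show ?thesis .
qed

end

section \<open>Quantization of a random variable\<close>

lemma random_var_parts:
  assumes f: "random_var M f"
  shows "pos_part f \<in> borel_measurable M" "\<And>x. 0 \<le> pos_part f x"
    "integrable M (\<lambda>x. (pos_part f x)\<^sup>2)"
    "neg_part f \<in> borel_measurable M" "\<And>x. 0 \<le> neg_part f x"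
    "integrable M (\<lambda>x. (neg_part f x)\<^sup>2)"
    "\<And>x. pos_part f x + neg_part f x = \<bar>f x\<bar>"
proof -
  have [measurable]: "f \<in> borel_measurable M" and f2: "integrable M (\<lambda>x. (f x)\<^sup>2)"
    using f by (simp_all add: random_var_def)
  show pm: "pos_part f \<in> borel_measurable M" "neg_part f \<in> borel_measurable M"
    unfolding pos_part_def neg_part_def by measurable
  show "\<And>x. 0 \<le> pos_part f x" "\<And>x. 0 \<le> neg_part f x"
    "\<And>x. pos_part f x + neg_part f x = \<bar>f x\<bar>"
    by (auto simp: pos_part_def neg_part_def)
  show "integrable M (\<lambda>x. (pos_part f x)\<^sup>2)"
    by (rule Bochner_Integration.integrable_bound[OF f2])
       (use pm in \<open>auto simp: pos_part_def max_def\<close>)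
  show "integrable M (\<lambda>x. (neg_part f x)\<^sup>2)"
    by (rule Bochner_Integration.integrable_bound[OF f2])
       (use pm in \<open>auto simp: neg_part_def min_def\<close>)
qed

text \<open>Adding the estimates for \<open>f\<^sup>+\<close> and \<open>f\<^sup>-\<close>: \<open>\<bar>(Q\<^sub>f g)(y)\<bar> \<le> \<bar>f y\<bar> \<parallel>g\<parallel>\<^sub>1\<close>.\<close>

lemma quant_bound:
  assumes f: "random_var M f" and g: "integrable M g"
  shows "cmod (quant M f g y) \<le> \<bar>f y\<bar> * (\<integral>x. cmod (g x) \<partial>M)"
proof -
  note parts = random_var_parts[OF f]
  have "cmod (quant M f g y)
          \<le> cmod (quant_nonneg M (pos_part f) g y) + cmod (quant_nonneg M (neg_part f) g y)"
    unfolding quant_def by (rule norm_triangle_ineq4)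
  also have "\<dots> \<le> pos_part f y * (\<integral>x. cmod (g x) \<partial>M) + neg_part f y * (\<integral>x. cmod (g x) \<partial>M)"
    by (intro add_mono quant_nonneg_bound parts g)
  also have "\<dots> = \<bar>f y\<bar> * (\<integral>x. cmod (g x) \<partial>M)"
    by (simp add: parts(7) flip: distrib_right)
  finally show ?thesis .
qed

lemma quant_AE_cong:
  assumes f: "random_var M f"
    and "g \<in> borel_measurable M" "g' \<in> borel_measurable M" "AE x in M. g x = g' x"
  shows "quant M f g y = quant M f g' y"
  unfolding quant_def
  using quant_nonneg_AE_cong[OF random_var_parts(1)[OF f] assms(2-4)]
    quant_nonneg_AE_cong[OF random_var_parts(4)[OF f] assms(2-4)] by simp

lemma quant_linear:
  assumes f: "random_var M f" and g: "integrable M g" and h: "integrable M h"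
  shows "quant M f (\<lambda>x. a * g x + b * h x) y = a * quant M f g y + b * quant M f h y"
  unfolding quant_def
  using quant_nonneg_linear[OF random_var_parts(1,2)[OF f] g h]
    quant_nonneg_linear[OF random_var_parts(4,5)[OF f] g h]
  by (simp add: algebra_simps)

context prob_space
begin

lemma quant_nonneg_L2:
  assumes \<phi>[measurable]: "\<phi> \<in> borel_measurable M" and pos: "\<And>x. 0 \<le> \<phi> x"
    and \<phi>2: "integrable M (\<lambda>x. (\<phi> x)\<^sup>2)" and g: "g \<in> L2 M"
  shows "quant_nonneg M \<phi> g \<in> L2 M"
proof -
  let ?c = "\<integral>x. cmod (g x) \<partial>M"
  have "cmod (quant_nonneg M \<phi> g y) \<le> \<bar>\<phi> y\<bar> * ?c" for y
    using quant_nonneg_bound[OF \<phi> pos L2_integrable[OF g]] pos by (simp add: abs_of_nonneg)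
  then show ?thesis
    by (rule L2_pointwise_bound(1)[OF quant_nonneg_measurable[OF \<phi> L2_borel_measurable[OF g]]
          \<phi> \<phi>2 integral_nonneg_AE[OF AE_I2[OF norm_ge_zero]]])
qed

lemma quant_nonneg_self_adjoint_L2:
  assumes \<phi>[measurable]: "\<phi> \<in> borel_measurable M" and pos: "\<And>x. 0 \<le> \<phi> x"
    and \<phi>2: "integrable M (\<lambda>x. (\<phi> x)\<^sup>2)" and g: "g \<in> L2 M" and h: "h \<in> L2 M"
  shows "L2inner M (quant_nonneg M \<phi> g) h = L2inner M g (quant_nonneg M \<phi> h)"
proof (rule quant_nonneg_self_adjoint[OF \<phi> pos L2_integrable[OF g] L2_integrable[OF h]])
  show "integrable M (\<lambda>x. cmod (g x) * \<phi> x)"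
    using L2_borel_measurable[OF g] g \<phi>2
    by (intro integrable_mult_square_integrable) (auto simp: L2_def)
qed

lemma quant_L2:
  assumes f: "random_var M f" and g: "g \<in> L2 M"
  shows "quant M f g \<in> L2 M"
    and "L2norm M (quant M f g) \<le> L2norm M (\<lambda>x. complex_of_real (f x)) * L2norm M g"
proof -
  note parts = random_var_parts[OF f]
  have fm: "f \<in> borel_measurable M" and f2: "integrable M (\<lambda>x. (f x)\<^sup>2)"
    using f by (simp_all add: random_var_def)
  have [measurable]: "g \<in> borel_measurable M" using g by (rule L2_borel_measurable)
  have qm: "quant M f g \<in> borel_measurable M"
    using parts(1,4) unfolding quant_def[abs_def] by measurable
  let ?c = "\<integral>x. cmod (g x) \<partial>M"
  have c: "0 \<le> ?c" by simp
  have bound: "cmod (quant M f g y) \<le> \<bar>f y\<bar> * ?c" for y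
    by (rule quant_bound[OF f L2_integrable[OF g]])
  show "quant M f g \<in> L2 M"
    by (rule L2_pointwise_bound(1)[OF qm fm f2 c bound])
  have "L2norm M (quant M f g) \<le> ?c * sqrt (\<integral>x. (f x)\<^sup>2 \<partial>M)"
    by (rule L2_pointwise_bound(2)[OF qm fm f2 c bound])
  also have "\<dots> \<le> L2norm M g * sqrt (\<integral>x. (f x)\<^sup>2 \<partial>M)"
    by (intro mult_right_mono L1_norm_le_L2norm g) simp
  also have "\<dots> = L2norm M (\<lambda>x. complex_of_real (f x)) * L2norm M g"
    by (simp add: L2norm_def mult.commute)
  finally show "L2norm M (quant M f g) \<le> L2norm M (\<lambda>x. complex_of_real (f x)) * L2norm M g" .
qed

lemma quant_self_adjoint:
  assumes f: "random_var M f" and g: "g \<in> L2 M" and h: "h \<in> L2 M"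
  shows "L2inner M (quant M f g) h = L2inner M g (quant M f h)"
proof -
  note parts = random_var_parts[OF f]
  let ?p = "pos_part f" and ?n = "neg_part f"
  have L2: "quant_nonneg M ?p g \<in> L2 M" "quant_nonneg M ?n g \<in> L2 M"
      "quant_nonneg M ?p h \<in> L2 M" "quant_nonneg M ?n h \<in> L2 M"
    using quant_nonneg_L2[OF parts(1-3)] quant_nonneg_L2[OF parts(4-6)] g h by auto
  have "L2inner M (quant M f g) h
          = L2inner M (quant_nonneg M ?p g) h - L2inner M (quant_nonneg M ?n g) h"
    unfolding quant_def by (rule L2inner_diff_left[OF L2(1,2) h])
  also have "\<dots> = L2inner M g (quant_nonneg M ?p h) - L2inner M g (quant_nonneg M ?n h)"
    using quant_nonneg_self_adjoint_L2[OF parts(1-3) g h]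
      quant_nonneg_self_adjoint_L2[OF parts(4-6) g h] by simp
  also have "\<dots> = L2inner M g (quant M f h)"
    unfolding quant_def by (rule L2inner_diff_right[OF g L2(3,4), symmetric])
  finally show ?thesis .
qed

end

theorem mainTheorem7:
  fixes M :: "'a measure" and f :: "'a \<Rightarrow> real"
  assumes "prob_space M" and "random_var M f"
  shows
    \<comment> \<open>well-defined: the defining integrals exist\<close>
    "(\<forall>g\<in>L2 M. \<forall>y\<in>space M.
        integrable M (\<lambda>x. complex_of_real (min (pos_part f x) (pos_part f y)) * g x) \<and>
        integrable M (\<lambda>x. complex_of_real (min (neg_part f x) (neg_part f y)) * g x))
   \<comment> \<open>maps H into H\<close>
   \<and> (\<forall>g\<in>L2 M. quant M f g \<in> L2 M)
   \<comment> \<open>independent of the representative of the a.e.-class\<close>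
   \<and> (\<forall>g\<in>L2 M. \<forall>g'\<in>L2 M. (AE x in M. g x = g' x) \<longrightarrow>
        (\<forall>y\<in>space M. quant M f g y = quant M f g' y))
   \<comment> \<open>linear\<close>
   \<and> (\<forall>g\<in>L2 M. \<forall>h\<in>L2 M. \<forall>a b. \<forall>y\<in>space M.
        quant M f (\<lambda>x. a * g x + b * h x) y = a * quant M f g y + b * quant M f h y)
   \<comment> \<open>bounded\<close>
   \<and> (\<exists>C. \<forall>g\<in>L2 M. L2norm M (quant M f g) \<le> C * L2norm M g)
   \<comment> \<open>self-adjoint\<close>
   \<and> (\<forall>g\<in>L2 M. \<forall>h\<in>L2 M. L2inner M (quant M f g) h = L2inner M g (quant M f h))
   \<comment> \<open>norm bound for nonnegative f\<close>
   \<and> ((AE x in M. 0 \<le> f x) \<longrightarrow>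
        (\<forall>g\<in>L2 M. L2norm M (quant M f g) \<le> L2norm M (\<lambda>x. complex_of_real (f x)) * L2norm M g))"
proof -
  interpret prob_space M by (rule assms(1))
  note f = assms(2) and parts = random_var_parts[OF assms(2)]
  have integrals: "\<forall>g\<in>L2 M. \<forall>y\<in>space M.
        integrable M (\<lambda>x. complex_of_real (min (pos_part f x) (pos_part f y)) * g x) \<and>
        integrable M (\<lambda>x. complex_of_real (min (neg_part f x) (neg_part f y)) * g x)"
    using quant_nonneg_integrable[OF parts(1,2) L2_integrable]
      quant_nonneg_integrable[OF parts(4,5) L2_integrable] by blast
  have ae_cong: "\<forall>g\<in>L2 M. \<forall>g'\<in>L2 M. (AE x in M. g x = g' x) \<longrightarrow>
        (\<forall>y\<in>space M. quant M f g y = quant M f g' y)"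
    using quant_AE_cong[OF f L2_borel_measurable L2_borel_measurable] by blast
  have linear: "\<forall>g\<in>L2 M. \<forall>h\<in>L2 M. \<forall>a b. \<forall>y\<in>space M.
        quant M f (\<lambda>x. a * g x + b * h x) y = a * quant M f g y + b * quant M f h y"
    using quant_linear[OF f L2_integrable L2_integrable] by blast
  have norm_bound: "\<forall>g\<in>L2 M. L2norm M (quant M f g)
                      \<le> L2norm M (\<lambda>x. complex_of_real (f x)) * L2norm M g"
    using quant_L2(2)[OF f] by blast
  then have bounded: "\<exists>C. \<forall>g\<in>L2 M. L2norm M (quant M f g) \<le> C * L2norm M g"
    by blast
  show ?thesis
    using integrals quant_L2(1)[OF f] ae_cong linear bounded quant_self_adjoint[OF f] norm_bound
    by blast
qed

end
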